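(* Let $P$ be a tree poset and $q$ a positive integer. Then $$M^*(n,q,P)\le\sum_{\mathrm{r}}\prod_{xy\in H(P)}n^{|\mathrm{r}(x)-\mathrm{r}(y)|}\cdot\binom{n}{\lfloor n/2\rfloor},$$ where the sum ranges over all poset homomorphisms $\mathrm{r}:P\to[q]$.
   Context: $\mathcal{B}_n$ is the family of subsets of $[n]$. A tree poset is a finite poset whose Hasse diagram is a tree. $M^*(n,q,P)$ is the number of induced copies of $P$ (injective maps $f$ into the family with $f(x)\subsetneq f(y)$ iff $x<_P y$) in the $q$ middle levels of $\mathcal{B}_n$, i.e. the $q$ consecutive layers $\{F:|F|=j\}$ closest to $n/2$. $H(P)$ is the directed Hasse diagram of $P$ (edge $xy$ when $y$ covers $x$). $[q]$ carries the reverse of the natural order, so a poset homomorphism $\mathrm{r}:P\to[q]$ satisfies $x<_P y\Rightarrow\mathrm{r}(x)>\mathrm{r}(y)$. *)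

theory Defs
  imports Main
begin

text \<open>A finite poset P is represented by a finite type 'a with its order.
  Cover relation (edges of the directed Hasse diagram H(P)): y covers x.\<close>

definition covers :: "'a::order \<Rightarrow> 'a \<Rightarrow> bool" where
  "covers x y \<longleftrightarrow> x < y \<and> \<not> (\<exists>z. x < z \<and> z < y)"

definition hasse :: "('a::order \<times> 'a) set" where
  "hasse = {(x, y). covers x y}"

definition hasse_adj :: "'a::order \<Rightarrow> 'a \<Rightarrow> bool" where
  "hasse_adj x y \<longleftrightarrow> covers x y \<or> covers y x"

definition hasse_connected :: "'a::order itself \<Rightarrow> bool" where
  "hasse_connected _ \<longleftrightarrow> (\<forall>x y::'a. (x, y) \<in> {(u, v). hasse_adj u v}\<^sup>*)"

definition hasse_acyclic :: "'a::order itself \<Rightarrow> bool" where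
  "hasse_acyclic _ \<longleftrightarrow> \<not> (\<exists>vs::'a list. length vs \<ge> 3 \<and> distinct vs \<and>
       (\<forall>i < length vs - 1. hasse_adj (vs ! i) (vs ! Suc i)) \<and>
       hasse_adj (last vs) (hd vs))"

definition tree_poset :: "'a::{order,finite} itself \<Rightarrow> bool" where
  "tree_poset T \<longleftrightarrow> hasse_connected T \<and> hasse_acyclic T"

text \<open>Indices of the q middle layers of B_n (sizes j with lo \<le> j < lo + q, j \<le> n).\<close>
definition middle_levels :: "nat \<Rightarrow> nat \<Rightarrow> nat set" where
  "middle_levels n q = {j. (n + 1 - q) div 2 \<le> j \<and> j < (n + 1 - q) div 2 + q \<and> j \<le> n}"

definition middle_family :: "nat \<Rightarrow> nat \<Rightarrow> nat set set" where
  "middle_family n q = {F. F \<subseteq> {1..n} \<and> card F \<in> middle_levels n q}"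

definition induced_copies :: "nat \<Rightarrow> nat \<Rightarrow> 'a::{order,finite} itself \<Rightarrow> ('a \<Rightarrow> nat set) set" where
  "induced_copies n q _ = {f. inj f \<and> (\<forall>x. f x \<in> middle_family n q) \<and>
                              (\<forall>x y. f x \<subset> f y \<longleftrightarrow> x < y)}"

definition Mstar :: "nat \<Rightarrow> nat \<Rightarrow> 'a::{order,finite} itself \<Rightarrow> nat" where
  "Mstar n q T = card (induced_copies n q T)"

text \<open>Poset homomorphisms P \<rightarrow> [q], with [q] = {1..q} carrying the reverse order.\<close>
definition homs_to_chain :: "nat \<Rightarrow> ('a::{order,finite} \<Rightarrow> nat) set" where
  "homs_to_chain q = {r. (\<forall>x. r x \<in> {1..q}) \<and> (\<forall>x y. x < y \<longrightarrow> r x > r y)}"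

end

theory Submission
  imports Defs "HOL-Library.FuncSet" "HOL.Binomial_Plus"
begin

(* Every induced copy f has the rank function r x = lo + q - card (f x) (lo the lowest middle
   level), which is a homomorphism into [q]; so it suffices to count the copies with a fixed r.
   Grow a spanning tree of the Hasse diagram from a root. The root set is one of at most
   C(n, n div 2) sets of its level, and across a Hasse edge xy the two sets are nested and differ
   in exactly |r x - r y| elements, so a placed endpoint leaves at most n ^ |r x - r y| choices
   for the other one. Hasse edges outside the spanning tree only enlarge the bound. *)

lemma binomial_le_self_pow: "n choose k \<le> n ^ k"
  by (cases "k \<le> n") (auto simp: binomial_le_pow binomial_eq_0)

lemma card_subsets_sym_diff_eq:
  assumes "finite B" "A \<subseteq> B"
  shows "card {G. G \<subseteq> B \<and> card (sym_diff G A) = d} = card B choose d"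
proof -
  have involution: "sym_diff (sym_diff D A) A = D" for D
    by auto
  have "{G. G \<subseteq> B \<and> card (sym_diff G A) = d} = (\<lambda>D. sym_diff D A) ` {D. D \<subseteq> B \<and> card D = d}"
  proof (intro equalityI subsetI)
    fix G assume "G \<in> {G. G \<subseteq> B \<and> card (sym_diff G A) = d}"
    then have "G \<subseteq> B" "card (sym_diff G A) = d"
      by simp_all
    moreover from \<open>G \<subseteq> B\<close> assms(2) have "sym_diff G A \<subseteq> B"
      by blast
    ultimately have "sym_diff G A \<in> {D. D \<subseteq> B \<and> card D = d}"
      by simp
    then show "G \<in> (\<lambda>D. sym_diff D A) ` {D. D \<subseteq> B \<and> card D = d}"
      by (rule image_eqI[rotated]) (simp add: involution)
  next
    fix G assume "G \<in> (\<lambda>D. sym_diff D A) ` {D. D \<subseteq> B \<and> card D = d}"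
    then obtain D where "D \<subseteq> B" "card D = d" "G = sym_diff D A"
      by blast
    moreover from \<open>D \<subseteq> B\<close> assms(2) have "sym_diff D A \<subseteq> B"
      by blast
    ultimately show "G \<in> {G. G \<subseteq> B \<and> card (sym_diff G A) = d}"
      by (simp add: involution)
  qed
  moreover have "inj (\<lambda>D. sym_diff D A)"
    by (rule injI) (metis involution)
  ultimately show ?thesis
    using n_subsets[OF assms(1)] by (simp add: card_image inj_on_subset)
qed

lemma card_le_sum_card_fibres:
  assumes "finite B" "g ` A \<subseteq> B"
  shows "card A \<le> (\<Sum>b\<in>B. card {a \<in> A. g a = b})"
proof (cases "finite A")
  case True
  have "A = (\<Union>b\<in>B. {a \<in> A. g a = b})"
    using assms(2) by blast
  then have "card A = card (\<Union>b\<in>B. {a \<in> A. g a = b})" by simp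
  also have "\<dots> \<le> (\<Sum>b\<in>B. card {a \<in> A. g a = b})"
    using assms(1) by (rule card_UN_le)
  finally show ?thesis .
qed simp

lemma prod_mono_superset_nat:
  fixes f :: "'a \<Rightarrow> nat"
  assumes "finite B" "A \<subseteq> B" "\<And>b. b \<in> B - A \<Longrightarrow> 1 \<le> f b"
  shows "prod f A \<le> prod f B"
proof -
  have "prod f B = prod f (B - A) * prod f A"
    using prod.subset_diff[OF assms(2,1)] .
  moreover have "1 \<le> prod f (B - A)"
    using assms(3) by (rule prod_ge_1)
  ultimately show ?thesis by simp
qed

lemma connected_insert_induct:
  fixes v :: "'a::finite"
  assumes connected: "\<And>x y. (x, y) \<in> R\<^sup>*"
    and single: "P {v}"
    and insert: "\<And>S x y. P S \<Longrightarrow> x \<in> S \<Longrightarrow> y \<notin> S \<Longrightarrow> (x, y) \<in> R \<Longrightarrow> P (insert y S)"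
  shows "P UNIV"
proof -
  have "P UNIV" if "P S" "v \<in> S" for S
    using that
  proof (induction "card (- S)" arbitrary: S rule: less_induct)
    case (less S)
    show ?case
    proof (cases "S = UNIV")
      case False
      then obtain z where "z \<notin> S" by blast
      have "z \<in> S \<or> (\<exists>x y. x \<in> S \<and> y \<notin> S \<and> (x, y) \<in> R)"
        using connected[of v z] \<open>v \<in> S\<close> by (induction rule: rtrancl_induct) auto
      then obtain x y where "x \<in> S" "y \<notin> S" "(x, y) \<in> R"
        using \<open>z \<notin> S\<close> by blast
      moreover have "card (- insert y S) < card (- S)"
        using \<open>y \<notin> S\<close> by (intro psubset_card_mono) auto
      ultimately show ?thesis
        using less insert by blast
    qed (use less in simp)
  qed
  then show ?thesis
    using single by blast
qed

lemma card_restrict_insert_le: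
  assumes "finite F" "x \<in> S"
    and fibre: "\<And>f. f \<in> F \<Longrightarrow> card {g y |g. g \<in> F \<and> g x = f x} \<le> k"
  shows "card ((\<lambda>f. restrict f (insert y S)) ` F) \<le> card ((\<lambda>f. restrict f S) ` F) * k"
proof -
  let ?R = "(\<lambda>f. restrict f S) ` F"
  define extensions where "extensions h = {g y |g. g \<in> F \<and> g x = h x}" for h :: "'a \<Rightarrow> 'b"
  have extensions_finite: "finite (extensions h)" for h
    using \<open>finite F\<close> by (simp add: extensions_def setcompr_eq_image)
  have "(\<lambda>f. restrict f (insert y S)) ` F \<subseteq> (\<lambda>(h, b). h(y := b)) ` Sigma ?R extensions"
  proof (rule image_subsetI)
    fix f assume "f \<in> F"
    then have "(restrict f S, f y) \<in> Sigma ?R extensions"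
      using \<open>x \<in> S\<close> by (auto simp: extensions_def)
    moreover have "restrict f (insert y S) = (restrict f S)(y := f y)"
      by (auto simp: restrict_def)
    ultimately show "restrict f (insert y S) \<in> (\<lambda>(h, b). h(y := b)) ` Sigma ?R extensions"
      by force
  qed
  then have "card ((\<lambda>f. restrict f (insert y S)) ` F) \<le> card ((\<lambda>(h, b). h(y := b)) ` Sigma ?R extensions)"
    using \<open>finite F\<close> extensions_finite by (intro card_mono) auto
  also have "\<dots> \<le> card (Sigma ?R extensions)"
    by (rule card_image_le) (use \<open>finite F\<close> extensions_finite in auto)
  also have "\<dots> = (\<Sum>h\<in>?R. card (extensions h))"
    using \<open>finite F\<close> extensions_finite by simp
  also have "\<dots> \<le> (\<Sum>h\<in>?R. k)"
    using fibre \<open>x \<in> S\<close> by (intro sum_mono) (auto simp: extensions_def)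
  finally show ?thesis by simp
qed

lemma card_le_prod_edge_fibres:
  fixes F :: "('a::finite \<Rightarrow> 'b) set" and E :: "('a \<times> 'a) set" and w :: "'a \<times> 'a \<Rightarrow> nat"
  assumes connected: "\<And>x y. (x, y) \<in> (E \<union> E\<inverse>)\<^sup>*"
    and root: "\<And>v. card ((\<lambda>f. f v) ` F) \<le> c"
    and forward: "\<And>x y f. (x, y) \<in> E \<Longrightarrow> f \<in> F \<Longrightarrow> card {g y |g. g \<in> F \<and> g x = f x} \<le> w (x, y)"
    and backward: "\<And>x y f. (x, y) \<in> E \<Longrightarrow> f \<in> F \<Longrightarrow> card {g x |g. g \<in> F \<and> g y = f y} \<le> w (x, y)"
  shows "card F \<le> c * (\<Prod>e\<in>E. w e)"
proof (cases "finite F \<and> F \<noteq> {}")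
  case True
  \<comment> \<open>Since F is nonempty all weights are positive, so adding edges never decreases the bound.\<close>
  then obtain f\<^sub>0 where "f\<^sub>0 \<in> F" by blast
  have w_pos: "1 \<le> w e" if "e \<in> E" for e
  proof -
    obtain x y where "e = (x, y)"
      by fastforce
    have "f\<^sub>0 y \<in> {g y |g. g \<in> F \<and> g x = f\<^sub>0 x}" and "finite {g y |g. g \<in> F \<and> g x = f\<^sub>0 x}"
      using True \<open>f\<^sub>0 \<in> F\<close> by auto
    then have "1 \<le> card {g y |g. g \<in> F \<and> g x = f\<^sub>0 x}"
      by (auto simp: Suc_le_eq card_gt_0_iff)
    with forward[OF that[unfolded \<open>e = (x, y)\<close>] \<open>f\<^sub>0 \<in> F\<close>] show ?thesis
      by (simp add: \<open>e = (x, y)\<close>)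
  qed
  define bounded where
    "bounded S \<longleftrightarrow> card ((\<lambda>f. restrict f S) ` F) \<le> c * (\<Prod>e\<in>E \<inter> S \<times> S. w e)" for S
  fix v :: 'a
  have "bounded UNIV"
    using connected
  proof (rule connected_insert_induct)
    have "card ((\<lambda>f. restrict f {v}) ` F) = card ((\<lambda>a. restrict (\<lambda>_. a) {v}) ` (\<lambda>f. f v) ` F)"
      by (simp add: image_image restrict_def cong: if_cong)
    also have "\<dots> \<le> card ((\<lambda>f. f v) ` F)"
      using True by (intro card_image_le) simp
    also have "\<dots> \<le> c"
      by (rule root)
    also have "\<dots> \<le> c * (\<Prod>e\<in>E \<inter> {v} \<times> {v}. w e)"
      using prod_ge_1[of "E \<inter> {v} \<times> {v}" w] w_pos by simp
    finally show "bounded {v}"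
      by (simp add: bounded_def)
  next
    fix S x y assume "bounded S" "x \<in> S" "y \<notin> S" "(x, y) \<in> E \<union> E\<inverse>"
    then obtain e where e: "e \<in> E" "e \<in> {(x, y), (y, x)}"
      and fibre: "\<And>f. f \<in> F \<Longrightarrow> card {g y |g. g \<in> F \<and> g x = f x} \<le> w e"
      using forward[of x y] backward[of y x] by auto
    have "card ((\<lambda>f. restrict f (insert y S)) ` F) \<le> card ((\<lambda>f. restrict f S) ` F) * w e"
      using True \<open>x \<in> S\<close> fibre by (intro card_restrict_insert_le) auto
    also have "\<dots> \<le> c * (\<Prod>e\<in>E \<inter> S \<times> S. w e) * w e"
      using \<open>bounded S\<close> by (simp add: bounded_def)
    also have "\<dots> = c * (\<Prod>e\<in>insert e (E \<inter> S \<times> S). w e)"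
      using e \<open>y \<notin> S\<close> by auto
    also have "\<dots> \<le> c * (\<Prod>e\<in>E \<inter> insert y S \<times> insert y S. w e)"
      using e \<open>x \<in> S\<close> w_pos by (intro mult_le_mono2 prod_mono_superset_nat) auto
    finally show "bounded (insert y S)"
      by (simp add: bounded_def)
  qed
  then show ?thesis
    by (simp add: bounded_def restrict_UNIV)
qed auto

(* The highest middle level gets rank 1, matching the reversed order on [q]. *)
definition copy_rank :: "nat \<Rightarrow> nat \<Rightarrow> ('a \<Rightarrow> nat set) \<Rightarrow> 'a \<Rightarrow> nat" where
  "copy_rank n q f x = (n + 1 - q) div 2 + q - card (f x)"

lemma induced_copy_subset: "f \<in> induced_copies n q T \<Longrightarrow> f x \<subseteq> {1..n}"
  unfolding induced_copies_def middle_family_def by blast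

lemma induced_copy_finite: "f \<in> induced_copies n q T \<Longrightarrow> finite (f x)"
  using induced_copy_subset finite_subset by (metis finite_atLeastAtMost)

lemma induced_copy_card_bounds:
  "f \<in> induced_copies n q T \<Longrightarrow> (n + 1 - q) div 2 \<le> card (f x) \<and> card (f x) < (n + 1 - q) div 2 + q"
  unfolding induced_copies_def middle_family_def middle_levels_def by blast

lemma induced_copy_psubset: "f \<in> induced_copies n q T \<Longrightarrow> x < y \<Longrightarrow> f x \<subset> f y"
  unfolding induced_copies_def by blast

lemma induced_copy_card_less: "f \<in> induced_copies n q T \<Longrightarrow> x < y \<Longrightarrow> card (f x) < card (f y)"
  by (simp add: induced_copy_psubset induced_copy_finite psubset_card_mono)

lemma card_sym_diff_induced_copy:
  assumes "f \<in> induced_copies n q T" "x < y"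
  shows "card (sym_diff (f y) (f x)) = copy_rank n q f x - copy_rank n q f y"
proof -
  have "f x \<subseteq> f y"
    using induced_copy_psubset[OF assms] by blast
  then have "sym_diff (f y) (f x) = f y - f x"
    by blast
  then have "card (sym_diff (f y) (f x)) = card (f y) - card (f x)"
    using card_Diff_subset[OF induced_copy_finite[OF assms(1)] \<open>f x \<subseteq> f y\<close>] by simp
  then show ?thesis
    using induced_copy_card_bounds[OF assms(1), of x] induced_copy_card_bounds[OF assms(1), of y]
    unfolding copy_rank_def by linarith
qed

lemma copy_rank_hom:
  assumes "f \<in> induced_copies n q T"
  shows "copy_rank n q f \<in> homs_to_chain q"
  unfolding homs_to_chain_def
proof (intro CollectI conjI allI impI)
  show "copy_rank n q f x \<in> {1..q}" for x
    using induced_copy_card_bounds[OF assms, of x] by (simp add: copy_rank_def, linarith)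
  show "copy_rank n q f x > copy_rank n q f y" if "x < y" for x y
    using induced_copy_card_less[OF assms that] induced_copy_card_bounds[OF assms, of y]
    unfolding copy_rank_def by linarith
qed

lemma card_copies_with_rank_le:
  fixes r :: "'a::{order,finite} \<Rightarrow> nat"
  assumes "hasse_connected TYPE('a)"
  shows "card {f \<in> induced_copies n q T. copy_rank n q f = r}
    \<le> (n choose (n div 2)) * (\<Prod>(x, y)\<in>hasse. n ^ nat \<bar>int (r x) - int (r y)\<bar>)"
proof (rule card_le_prod_edge_fibres)
  let ?C = "{f \<in> induced_copies n q T. copy_rank n q f = r}"
  show "(x, y) \<in> (hasse \<union> hasse\<inverse>)\<^sup>*" for x y :: 'a
  proof -
    have "{(u, v). hasse_adj u v} = (hasse :: ('a \<times> 'a) set) \<union> hasse\<inverse>"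
      by (auto simp: hasse_adj_def hasse_def)
    then show ?thesis
      using assms by (simp add: hasse_connected_def)
  qed
  show "card ((\<lambda>f. f v) ` ?C) \<le> n choose (n div 2)" for v
  proof -
    have "(\<lambda>f. f v) ` ?C \<subseteq> {G. G \<subseteq> {1..n} \<and> card G = (n + 1 - q) div 2 + q - r v}"
    proof (rule image_subsetI)
      fix f assume "f \<in> ?C"
      then have "f \<in> induced_copies n q T" "r v = (n + 1 - q) div 2 + q - card (f v)"
        by (auto simp: copy_rank_def)
      then show "f v \<in> {G. G \<subseteq> {1..n} \<and> card G = (n + 1 - q) div 2 + q - r v}"
        using induced_copy_subset induced_copy_card_bounds[of f n q T v] by simp
    qed
    then have "card ((\<lambda>f. f v) ` ?C) \<le> card {G. G \<subseteq> {1..n} \<and> card G = (n + 1 - q) div 2 + q - r v}"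
      by (intro card_mono) simp_all
    also have "\<dots> = n choose ((n + 1 - q) div 2 + q - r v)"
      using n_subsets[of "{1..n}"] by simp
    also have "\<dots> \<le> n choose (n div 2)"
      by (rule binomial_maximum)
    finally show ?thesis .
  qed
  fix x y :: 'a and f :: "'a \<Rightarrow> nat set"
  assume "(x, y) \<in> hasse" "f \<in> ?C"
  then have "x < y"
    by (simp add: hasse_def covers_def)
  have "r y < r x"
    using copy_rank_hom[of f n q T] \<open>f \<in> ?C\<close> \<open>x < y\<close> by (simp add: homs_to_chain_def)
  then have weight: "(\<lambda>(x, y). n ^ nat \<bar>int (r x) - int (r y)\<bar>) (x, y) = n ^ (r x - r y)"
    by (simp add: nat_diff_distrib')
  have distance: "card (sym_diff (g y) (g x)) = r x - r y" if "g \<in> ?C" for g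
    using that card_sym_diff_induced_copy[of g n q T x y] \<open>x < y\<close> by simp
  have sphere: "card {g z |g. g \<in> ?C \<and> g u = f u} \<le> n ^ (r x - r y)"
    if "\<And>g. g \<in> ?C \<Longrightarrow> card (sym_diff (g z) (g u)) = r x - r y" for u z
  proof -
    have "{g z |g. g \<in> ?C \<and> g u = f u} \<subseteq> {G. G \<subseteq> {1..n} \<and> card (sym_diff G (f u)) = r x - r y}"
    proof (intro subsetI CollectI)
      fix G assume "G \<in> {g z |g. g \<in> ?C \<and> g u = f u}"
      then obtain g where "g \<in> ?C" "g u = f u" "G = g z"
        by blast
      then show "G \<subseteq> {1..n} \<and> card (sym_diff G (f u)) = r x - r y"
        using that[of g] induced_copy_subset[of g n q T z] by simp
    qed
    then have "card {g z |g. g \<in> ?C \<and> g u = f u}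
        \<le> card {G. G \<subseteq> {1..n} \<and> card (sym_diff G (f u)) = r x - r y}"
      by (intro card_mono) simp_all
    also have "\<dots> = n choose (r x - r y)"
      using card_subsets_sym_diff_eq[of "{1..n}" "f u"] induced_copy_subset[of f n q T u] \<open>f \<in> ?C\<close> by simp
    also have "\<dots> \<le> n ^ (r x - r y)"
      by (rule binomial_le_self_pow)
    finally show ?thesis .
  qed
  show "card {g y |g. g \<in> ?C \<and> g x = f x} \<le> (\<lambda>(x, y). n ^ nat \<bar>int (r x) - int (r y)\<bar>) (x, y)"
    unfolding weight using distance by (rule sphere)
  show "card {g x |g. g \<in> ?C \<and> g y = f y} \<le> (\<lambda>(x, y). n ^ nat \<bar>int (r x) - int (r y)\<bar>) (x, y)"
  proof -
    have "card (sym_diff (g x) (g y)) = r x - r y" if "g \<in> ?C" for g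
      using distance[OF that] by (simp only: Un_commute)
    then show ?thesis
      unfolding weight by (rule sphere)
  qed
qed

lemma finite_homs_to_chain: "finite (homs_to_chain q :: ('a::{order,finite} \<Rightarrow> nat) set)"
proof (rule finite_subset)
  show "homs_to_chain q \<subseteq> PiE (UNIV :: 'a set) (\<lambda>_. {1..q})"
    by (auto simp: homs_to_chain_def PiE_UNIV_domain)
qed (simp add: finite_PiE)

theorem lemma5p4:
  fixes T :: "'a::{order,finite} itself" and n q :: nat
  assumes "tree_poset T" and "q > 0"
  shows "Mstar n q T \<le>
    (\<Sum>r\<in>homs_to_chain q. \<Prod>(x, y)\<in>(hasse :: ('a \<times> 'a) set). n ^ nat \<bar>int (r x) - int (r y)\<bar>)
      * (n choose (n div 2))"
proof -
  have "hasse_connected TYPE('a)"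
    using assms(1) by (simp add: tree_poset_def hasse_connected_def)
  have "Mstar n q T \<le> (\<Sum>r\<in>homs_to_chain q. card {f \<in> induced_copies n q T. copy_rank n q f = r})"
    unfolding Mstar_def
    by (rule card_le_sum_card_fibres) (auto simp: finite_homs_to_chain copy_rank_hom)
  also have "\<dots> \<le> (\<Sum>r\<in>homs_to_chain q.
      (n choose (n div 2)) * (\<Prod>(x, y)\<in>(hasse :: ('a \<times> 'a) set). n ^ nat \<bar>int (r x) - int (r y)\<bar>))"
    by (rule sum_mono) (rule card_copies_with_rank_le[OF \<open>hasse_connected TYPE('a)\<close>])
  also have "\<dots> = (\<Sum>r\<in>homs_to_chain q.
      \<Prod>(x, y)\<in>(hasse :: ('a \<times> 'a) set). n ^ nat \<bar>int (r x) - int (r y)\<bar>) * (n choose (n div 2))"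
    by (subst sum_distrib_right) (simp add: mult.commute)
  finally show ?thesis .
qed

end
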